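(* Let $u\in(0,\frac12)$ and let $\{p_i\}_{i\in\mathcal{I}}$ be a finite nonempty family with $p_i\in[u,\frac12]$ for all $i\in\mathcal{I}$. Then $$\frac{\sqrt{\sum_{i\in\mathcal{I}}p_i^3(1-p_i)}}{\sum_{i\in\mathcal{I}}p_i(1-p_i)}\le\frac{1+2u+4u^2-8u^3}{\sqrt{16|\mathcal{I}|\,u\,(1-u-4u^2+4u^3)}}.$$ *)

theory Defs
  imports Complex_Main
begin

end

theory Submission
  imports Defs
begin

(* Write K = 1 + 2u + 4u^2 - 8u^3 and C = u(1-u)(1+2u).  The proof rests on a
   single polynomial inequality: for every p in [u, 1/2],
       4(1-2u) p^3(1-p) <= K p(1-p) - C,
   because the difference factors as (p-u)(1/2-p) times a quadratic that is
   positive on [0, 1/2].  Summing over the family gives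
       4(1-2u) S3 <= K S - n C,   with S3 = sum p^3(1-p), S = sum p(1-p), n = |I|.
   Multiplying by 4nC and using 4nC(KS - nC) <= (KS)^2 (AM-GM) yields
       S3 * D <= (KS)^2,   where D = 16 n u (1-u-4u^2+4u^3) = 16 n (1-2u) C,
   and taking square roots gives the claimed bound sqrt S3 / S <= K / sqrt D. *)

lemma cofactor_pos:
  fixes u p :: real
  assumes "0 < u" "u < 1/2" "0 \<le> p" "p \<le> 1/2"
  shows "0 \<le> -4*(1-2*u)*p^2 + 2*(1-2*u)^2*p + 2*(1-u)*(1+2*u)"
proof -
  have "p*p \<le> (1/2)*(1/2)" using assms by (intro mult_mono) auto
  then have "(1-2*u)*(p*p) \<le> (1-2*u)*(1/4)" using assms by (intro mult_left_mono) auto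
  moreover have "0 \<le> 2*(1-2*u)^2*p" using assms by simp
  moreover have "u*u < u*1" using assms by (intro mult_strict_left_mono) auto
  ultimately show ?thesis by (simp add: algebra_simps power2_eq_square)
qed

lemma pointwise_bound:
  fixes u p :: real
  assumes "0 < u" "u < 1/2" "u \<le> p" "p \<le> 1/2"
  shows "4*(1-2*u) * (p^3*(1-p))
           \<le> (1 + 2*u + 4*u^2 - 8*u^3) * (p*(1-p)) - u*(1-u)*(1+2*u)"
proof -
  let ?q = "-4*(1-2*u)*p^2 + 2*(1-2*u)^2*p + 2*(1-u)*(1+2*u)"
  have factored: "(1 + 2*u + 4*u^2 - 8*u^3) * (p*(1-p)) - u*(1-u)*(1+2*u)
                    - 4*(1-2*u) * (p^3*(1-p)) = (p-u)*(1/2-p)*?q"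
    by (simp add: field_simps power2_eq_square power3_eq_cube)
  have "0 \<le> (p-u)*(1/2-p)*?q"
    using assms cofactor_pos[of u p] by (intro mult_nonneg_nonneg) auto
  with factored show ?thesis by linarith
qed

lemma summed_bound:
  fixes u :: real and I :: "'a set" and p :: "'a \<Rightarrow> real"
  assumes "0 < u" "u < 1/2"
    and "\<And>i. i \<in> I \<Longrightarrow> u \<le> p i \<and> p i \<le> 1/2"
  shows "4*(1-2*u) * (\<Sum>i\<in>I. (p i)^3 * (1 - p i))
           \<le> (1 + 2*u + 4*u^2 - 8*u^3) * (\<Sum>i\<in>I. p i * (1 - p i))
             - real (card I) * (u*(1-u)*(1+2*u))"
proof -
  let ?K = "1 + 2*u + 4*u^2 - 8*u^3" and ?C = "u*(1-u)*(1+2*u)"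
  have "4*(1-2*u) * (\<Sum>i\<in>I. (p i)^3 * (1 - p i))
          = (\<Sum>i\<in>I. 4*(1-2*u) * ((p i)^3 * (1 - p i)))"
    by (simp add: sum_distrib_left)
  also have "\<dots> \<le> (\<Sum>i\<in>I. ?K * (p i * (1 - p i)) - ?C)"
    using assms pointwise_bound by (intro sum_mono) auto
  also have "\<dots> = ?K * (\<Sum>i\<in>I. p i * (1 - p i)) - real (card I) * ?C"
    by (simp add: sum_subtractf sum_distrib_left)
  finally show ?thesis .
qed

lemma am_gm_product: "4*c*(a - c) \<le> (a::real)^2"
proof -
  have "0 \<le> (a - 2*c)^2" by simp
  then show ?thesis by (simp add: power2_eq_square algebra_simps)
qed

lemma sqrt_ratio_le:
  fixes x S D K :: real
  assumes "0 \<le> x" "0 < S" "0 < D" "0 \<le> K" and "x * D \<le> (K*S)^2"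
  shows "sqrt x / S \<le> K / sqrt D"
proof -
  have "sqrt x * sqrt D = sqrt (x * D)" by (simp add: real_sqrt_mult)
  also have "\<dots> \<le> sqrt ((K*S)^2)" using assms(5) by (rule real_sqrt_le_mono)
  also have "\<dots> = K*S" using assms(2,4) by simp
  finally show ?thesis using assms(2,3) by (simp add: divide_simps mult.commute)
qed

lemma leading_coefficient_nonneg:
  fixes u :: real
  assumes "0 < u" "u < 1/2"
  shows "0 \<le> 1 + 2*u + 4*u^2 - 8*u^3"
proof -
  have "u^2*(2*u) \<le> u^2*1" using assms by (intro mult_left_mono) auto
  then have "8*u^3 \<le> 4*u^2" by (simp add: power2_eq_square power3_eq_cube)
  then show ?thesis using assms(1) by linarith
qed

theorem mainTheorem14:
  fixes u :: real and I :: "'a set" and p :: "'a \<Rightarrow> real"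
  assumes "0 < u" and "u < 1/2"
    and "finite I" and "I \<noteq> {}"
    and "\<And>i. i \<in> I \<Longrightarrow> u \<le> p i \<and> p i \<le> 1/2"
  shows "sqrt (\<Sum>i\<in>I. (p i)^3 * (1 - p i)) / (\<Sum>i\<in>I. p i * (1 - p i))
    \<le> (1 + 2*u + 4*u^2 - 8*u^3) / sqrt (16 * real (card I) * u * (1 - u - 4*u^2 + 4*u^3))"
proof -
  define S3 where "S3 = (\<Sum>i\<in>I. (p i)^3 * (1 - p i))"
  define S where "S = (\<Sum>i\<in>I. p i * (1 - p i))"
  define K where "K = 1 + 2*u + 4*u^2 - 8*u^3"
  define nC where "nC = real (card I) * (u*(1-u)*(1+2*u))"
  have range: "\<And>i. i \<in> I \<Longrightarrow> 0 < p i \<and> p i < 1" using assms(1,2,5) by force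
  have S3_nonneg: "0 \<le> S3" unfolding S3_def using range by (intro sum_nonneg) (simp add: less_imp_le)
  have S_pos: "0 < S" unfolding S_def using assms(3,4) range by (intro sum_pos) simp_all
  have nC_pos: "0 < nC" unfolding nC_def using assms(1-4) by (simp add: card_gt_0_iff)
  have K_nonneg: "0 \<le> K" unfolding K_def using assms(1,2) by (rule leading_coefficient_nonneg)
  have D_eq: "16 * real (card I) * u * (1 - u - 4*u^2 + 4*u^3) = 4*nC * (4*(1-2*u))"
    unfolding nC_def by (simp add: field_simps power2_eq_square power3_eq_cube)
  have "S3 * (4*nC * (4*(1-2*u))) = 4*nC * (4*(1-2*u) * S3)" by simp
  also have "\<dots> \<le> 4*nC * (K*S - nC)"
    using summed_bound[OF assms(1,2,5)] nC_pos
    unfolding S3_def S_def K_def nC_def by (intro mult_left_mono) auto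
  also have "\<dots> \<le> (K*S)^2" by (rule am_gm_product)
  finally have "S3 * (4*nC * (4*(1-2*u))) \<le> (K*S)^2" .
  then have "sqrt S3 / S \<le> K / sqrt (4*nC * (4*(1-2*u)))"
    using S3_nonneg S_pos nC_pos K_nonneg assms(2) by (intro sqrt_ratio_le) auto
  then show ?thesis unfolding D_eq S3_def S_def K_def .
qed

end
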